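(* Let $[r:s]\in\mathbb{P}^1$, $X=\{u_1x=v_1y,\ u_2z=v_2t,\ w^2+r(x+y)^2+r(z+t)^2=(2s+2)(xt+yz)+(2s-2)(xz+yt)\}\subset\mathbb{P}^1\times\mathbb{P}^1\times\mathbb{P}^4$, and let $\mathbf{G}\subset\mathrm{Aut}(X)$ be generated by $\Gamma$ and $\tau_1,\tau_2,\tau_3$. If $[r:s]\neq[\pm1:1]$, then $X$ has no $\mathbf{G}$-fixed points. If $[r:s]=[\pm1:1]$, then the only $\mathbf{G}$-fixed point of $X$ is the singular point $([1:1],[1:1],[1:1:\pm1:\pm1:0])$ (with the same sign as in $[r:s]$).
   Context: Coordinates are $([u_1:v_1],[u_2:v_2],[x:y:z:t:w])$. $\tau_1\colon([u_1:v_1],[u_2:v_2],[x:y:z:t:w])\mapsto([v_1:u_1],[v_2:u_2],[y:x:t:z:w])$, $\tau_2\colon\mapsto([u_2:v_2],[u_1:v_1],[z:t:x:y:w])$, $\tau_3\colon\mapsto([u_1:v_1],[u_2:v_2],[x:y:z:t:-w])$. $\Gamma\cong\mathbb{C}^\ast$ is the subgroup of $\mathrm{Aut}(X)$ obtained by lifting to $X$ (via the blow up $X\to Q$ of the quadric $Q\subset\mathbb{P}^4$ with the same equation along $Q\cap\{x=y=0\}$ and $Q\cap\{z=t=0\}$) the action on $\mathbb{P}^4$ by the matrices $$\begin{pmatrix}\frac{1+\lambda}{2}&\frac{1-\lambda}{2}&0&0&0\\ \frac{1-\lambda}{2}&\frac{1+\lambda}{2}&0&0&0\\ 0&0&\frac{\lambda+1}{2\lambda}&\frac{\lambda-1}{2\lambda}&0\\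 0&0&\frac{\lambda-1}{2\lambda}&\frac{\lambda+1}{2\lambda}&0\\ 0&0&0&0&1\end{pmatrix},\quad\lambda\in\mathbb{C}^\ast,$$ acting on $[x:y:z:t:w]$, which preserves $Q$ and both planes. *)

theory Defs
  imports Complex_Main
begin

text \<open>A point of P^1 x P^1 x P^4 is represented by homogeneous coordinates
  ([u1:v1],[u2:v2],[x:y:z:t:w]).\<close>

datatype pt = Pt complex complex complex complex complex complex complex complex complex

fun valid_pt :: "pt \<Rightarrow> bool" where
  "valid_pt (Pt u1 v1 u2 v2 x y z t w) \<longleftrightarrow>
     (u1, v1) \<noteq> (0, 0) \<and> (u2, v2) \<noteq> (0, 0) \<and> (x, y, z, t, w) \<noteq> (0, 0, 0, 0, 0)"

fun proj_eq :: "pt \<Rightarrow> pt \<Rightarrow> bool" where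
  "proj_eq (Pt u1 v1 u2 v2 x y z t w) (Pt u1' v1' u2' v2' x' y' z' t' w') \<longleftrightarrow>
     (\<exists>a b c. a \<noteq> 0 \<and> b \<noteq> 0 \<and> c \<noteq> 0 \<and>
        u1' = a * u1 \<and> v1' = a * v1 \<and> u2' = b * u2 \<and> v2' = b * v2 \<and>
        x' = c * x \<and> y' = c * y \<and> z' = c * z \<and> t' = c * t \<and> w' = c * w)"

fun inX :: "complex \<Rightarrow> complex \<Rightarrow> pt \<Rightarrow> bool" where
  "inX r s (Pt u1 v1 u2 v2 x y z t w) \<longleftrightarrow>
     u1 * x = v1 * y \<and> u2 * z = v2 * t \<and>
     w^2 + r * (x + y)^2 + r * (z + t)^2 = (2*s + 2) * (x*t + y*z) + (2*s - 2) * (x*z + y*t)"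

fun tau1 :: "pt \<Rightarrow> pt" where
  "tau1 (Pt u1 v1 u2 v2 x y z t w) = Pt v1 u1 v2 u2 y x t z w"

fun tau2 :: "pt \<Rightarrow> pt" where
  "tau2 (Pt u1 v1 u2 v2 x y z t w) = Pt u2 v2 u1 v1 z t x y w"

fun tau3 :: "pt \<Rightarrow> pt" where
  "tau3 (Pt u1 v1 u2 v2 x y z t w) = Pt u1 v1 u2 v2 x y z t (-w)"

text \<open>The element of Gamma corresponding to lambda: the given matrix on P^4, lifted to X.
  On X one has [u1:v1] = [y:x] and [u2:v2] = [t:z] (where defined), and the lift acts on
  (u1,v1) by the upper 2x2 block and on (u2,v2) by the middle 2x2 block.\<close>
fun gam :: "complex \<Rightarrow> pt \<Rightarrow> pt" where
  "gam l (Pt u1 v1 u2 v2 x y z t w) =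
     Pt ((1 + l)/2 * u1 + (1 - l)/2 * v1) ((1 - l)/2 * u1 + (1 + l)/2 * v1)
        ((l + 1)/(2*l) * u2 + (l - 1)/(2*l) * v2) ((l - 1)/(2*l) * u2 + (l + 1)/(2*l) * v2)
        ((1 + l)/2 * x + (1 - l)/2 * y) ((1 - l)/2 * x + (1 + l)/2 * y)
        ((l + 1)/(2*l) * z + (l - 1)/(2*l) * t) ((l - 1)/(2*l) * z + (l + 1)/(2*l) * t)
        w"

text \<open>The group G generated by Gamma and tau1, tau2, tau3 (closure under composition; all
  generators have inverses among the generators).\<close>
inductive_set Ggrp :: "(pt \<Rightarrow> pt) set" where
  G_id: "id \<in> Ggrp"
| G_tau1: "tau1 \<in> Ggrp"
| G_tau2: "tau2 \<in> Ggrp"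
| G_tau3: "tau3 \<in> Ggrp"
| G_gam: "l \<noteq> 0 \<Longrightarrow> gam l \<in> Ggrp"
| G_comp: "f \<in> Ggrp \<Longrightarrow> g \<in> Ggrp \<Longrightarrow> f \<circ> g \<in> Ggrp"

definition G_fixed :: "pt \<Rightarrow> bool" where
  "G_fixed p \<longleftrightarrow> (\<forall>g\<in>Ggrp. proj_eq p (g p))"

fun gradF1 :: "pt \<Rightarrow> complex list" where
  "gradF1 (Pt u1 v1 u2 v2 x y z t w) = [x, -y, 0, 0, u1, -v1, 0, 0, 0]"

fun gradF2 :: "pt \<Rightarrow> complex list" where
  "gradF2 (Pt u1 v1 u2 v2 x y z t w) = [0, 0, z, -t, 0, 0, u2, -v2, 0]"

fun gradF3 :: "complex \<Rightarrow> complex \<Rightarrow> pt \<Rightarrow> complex list" where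
  "gradF3 r s (Pt u1 v1 u2 v2 x y z t w) =
     [0, 0, 0, 0,
      2*r*(x + y) - (2*s + 2)*t - (2*s - 2)*z,
      2*r*(x + y) - (2*s + 2)*z - (2*s - 2)*t,
      2*r*(z + t) - (2*s + 2)*y - (2*s - 2)*x,
      2*r*(z + t) - (2*s + 2)*x - (2*s - 2)*y,
      2*w]"

text \<open>Jacobian criterion: X is singular at p iff the Jacobian matrix of the three
  (multi-homogeneous) equations has rank < 3 at p.\<close>
definition singular_X :: "complex \<Rightarrow> complex \<Rightarrow> pt \<Rightarrow> bool" where
  "singular_X r s p \<longleftrightarrow> inX r s p \<and>
     (\<exists>a b c. (a, b, c) \<noteq> (0, 0, 0) \<and>
        (\<forall>i<9. a * gradF1 p ! i + b * gradF2 p ! i + c * gradF3 r s p ! i = 0))"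

end

theory Submission
  imports Defs
begin

text \<open>A \<open>G\<close>-fixed point is fixed by \<open>\<tau>\<^sub>3\<close>, which forces \<open>w = 0\<close>. The element
  \<open>\<lambda> = 2\<close> of \<open>\<Gamma>\<close> multiplies \<open>x - y\<close> by \<open>\<lambda>\<close> but \<open>z - t\<close> by \<open>1/\<lambda>\<close>, while \<open>\<tau>\<^sub>2\<close>
  exchanges the blocks \<open>(x,y)\<close> and \<open>(z,t)\<close> up to a scalar; a common eigenvector
  therefore has \<open>x = y\<close> and \<open>z = t\<close>, and \<open>\<tau>\<^sub>2\<close> gives \<open>z = e x\<close> with \<open>e\<^sup>2 = 1\<close>. On
  such points the quadric equation reduces to \<open>r = e s\<close>. Conversely every generator
  maps the points \<open>([a:a],[b:b],[c:c:ec:ec:0])\<close> to points of the same form, and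
  when \<open>r = e s\<close> the gradient of the quadric vanishes at \<open>[1:1:e:e:0]\<close>.\<close>

definition diag_pts :: "complex \<Rightarrow> pt set" where
  "diag_pts e = {Pt a a b b c c (e * c) (e * c) 0 | a b c. a \<noteq> 0 \<and> b \<noteq> 0 \<and> c \<noteq> 0}"

lemma proj_eq_base_iff_diag_pts:
  "proj_eq (Pt 1 1 1 1 1 1 e e 0) p \<longleftrightarrow> p \<in> diag_pts e"
  by (cases p) (auto simp: diag_pts_def mult.commute)

lemma proj_eq_diag_pts:
  assumes "p \<in> diag_pts e" and "q \<in> diag_pts e"
  shows "proj_eq p q"
proof -
  obtain a b c a' b' c' where
    p: "p = Pt a a b b c c (e * c) (e * c) 0" "a \<noteq> 0" "b \<noteq> 0" "c \<noteq> 0" and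
    q: "q = Pt a' a' b' b' c' c' (e * c') (e * c') 0" "a' \<noteq> 0" "b' \<noteq> 0" "c' \<noteq> 0"
    using assms unfolding diag_pts_def by blast
  show ?thesis
    unfolding p(1) q(1) proj_eq.simps
    by (rule exI[of _ "a'/a"], rule exI[of _ "b'/b"], rule exI[of _ "c'/c"]) (use p q in simp)
qed

lemma gam_diagonal:
  assumes "l \<noteq> 0"
  shows "gam l (Pt a a b b x x z z w) = Pt a a b b x x z z w"
proof -
  have "(1 + l)/2 * a + (1 - l)/2 * a = a" "(1 - l)/2 * a + (1 + l)/2 * a = a" for a :: complex
    by (simp_all add: field_simps)
  moreover have "(l + 1)/(2*l) * b + (l - 1)/(2*l) * b = b" "(l - 1)/(2*l) * b + (l + 1)/(2*l) * b = b"
    for b :: complex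
    using assms by (simp_all add: field_simps)
  ultimately show ?thesis by simp
qed

lemma Ggrp_maps_diag_pts:
  assumes "g \<in> Ggrp" and "e * e = 1" and "p \<in> diag_pts e"
  shows "g p \<in> diag_pts e"
  using assms(1,3)
proof (induction arbitrary: p)
  case G_tau2
  then obtain a b c where p: "p = Pt a a b b c c (e * c) (e * c) 0" "a \<noteq> 0" "b \<noteq> 0" "c \<noteq> 0"
    unfolding diag_pts_def by blast
  have "tau2 p = Pt b b a a (e * c) (e * c) (e * (e * c)) (e * (e * c)) 0"
    using \<open>e * e = 1\<close> by (simp add: p(1) mult.assoc[symmetric])
  moreover have "e * c \<noteq> 0" using \<open>e * e = 1\<close> p(4) by auto
  ultimately show ?case
    unfolding diag_pts_def using p(2,3) by blast
next
  case (G_gam l)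
  then show ?case
    unfolding diag_pts_def by (auto simp del: gam.simps simp add: gam_diagonal)
qed (auto simp: diag_pts_def)

lemma inX_diag_pts:
  assumes "e * e = 1" and "r = s * e" and "p \<in> diag_pts e"
  shows "inX r s p"
proof -
  obtain a b c where p: "p = Pt a a b b c c (e * c) (e * c) 0"
    using assms(3) unfolding diag_pts_def by blast
  have "r * (e * c + e * c)\<^sup>2 = 4 * r * c\<^sup>2"
    using assms(1) by (simp add: power2_eq_square algebra_simps)
  then show ?thesis
    unfolding p using assms(2) by (simp add: power2_eq_square algebra_simps)
qed

lemma diag_pts_G_fixed:
  assumes "e * e = 1" and "r = s * e" and "p \<in> diag_pts e"
  shows "valid_pt p \<and> inX r s p \<and> G_fixed p"
  using assms inX_diag_pts proj_eq_diag_pts Ggrp_maps_diag_pts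
  by (auto simp: G_fixed_def diag_pts_def)

lemma tau3_fixed_imp_w_eq_0:
  assumes "inX r s (Pt u1 v1 u2 v2 x y z t w)"
    and "proj_eq (Pt u1 v1 u2 v2 x y z t w) (tau3 (Pt u1 v1 u2 v2 x y z t w))"
  shows "w = 0"
proof (rule ccontr)
  assume "w \<noteq> 0"
  from assms(2) obtain c where c: "x = c * x" "y = c * y" "z = c * z" "t = c * t" "- w = c * w"
    by auto
  have "(c + 1) * w = 0"
    using c(5) by (simp add: distrib_right flip: c(5))
  with \<open>w \<noteq> 0\<close> have "c = -1"
    by (simp add: add_eq_0_iff2)
  with c have "x = 0" "y = 0" "z = 0" "t = 0" by auto
  with assms(1) \<open>w \<noteq> 0\<close> show False by simp
qed

lemma gam_fixed_imp_eigen: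
  assumes "l \<noteq> 0"
    and "proj_eq (Pt u1 v1 u2 v2 x y z t w) (gam l (Pt u1 v1 u2 v2 x y z t w))"
  obtains c where "c * (x - y) = l * (x - y)" and "l * c * (z - t) = z - t"
proof -
  from assms(2) obtain c where
    xy: "(1 + l)/2 * x + (1 - l)/2 * y = c * x" "(1 - l)/2 * x + (1 + l)/2 * y = c * y" and
    zt: "(l + 1)/(2*l) * z + (l - 1)/(2*l) * t = c * z" "(l - 1)/(2*l) * z + (l + 1)/(2*l) * t = c * t"
    by auto
  have "c * (x - y) = ((1 + l)/2 * x + (1 - l)/2 * y) - ((1 - l)/2 * x + (1 + l)/2 * y)"
    using xy by (simp add: right_diff_distrib)
  also have "\<dots> = l * (x - y)" by (simp add: field_simps)
  finally have xy_eigen: "c * (x - y) = l * (x - y)" .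
  have "l * c * (z - t) = l * (((l + 1)/(2*l) * z + (l - 1)/(2*l) * t) - ((l - 1)/(2*l) * z + (l + 1)/(2*l) * t))"
    using zt by (simp add: right_diff_distrib mult.assoc)
  also have "\<dots> = z - t" using assms(1) by (simp add: field_simps)
  finally have zt_eigen: "l * c * (z - t) = z - t" .
  from xy_eigen zt_eigen show thesis by (rule that)
qed

lemma tau2_gam_fixed_imp_diagonal:
  assumes "l \<noteq> 0" and "l * l \<noteq> 1"
    and "proj_eq (Pt u1 v1 u2 v2 x y z t w) (tau2 (Pt u1 v1 u2 v2 x y z t w))"
    and "proj_eq (Pt u1 v1 u2 v2 x y z t w) (gam l (Pt u1 v1 u2 v2 x y z t w))"
  shows "y = x" and "t = z"
proof -
  from assms(3) obtain d where d: "d \<noteq> 0" "z = d * x" "t = d * y"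
    by auto
  from assms(1,4) obtain c where c: "c * (x - y) = l * (x - y)" "l * c * (z - t) = z - t"
    by (rule gam_fixed_imp_eigen)
  show "y = x"
  proof (rule ccontr)
    assume "y \<noteq> x"
    then have "c = l" using c(1) by simp
    moreover have "z - t \<noteq> 0"
      using d \<open>y \<noteq> x\<close> by (simp add: right_diff_distrib[symmetric])
    ultimately have "l * l = 1" using c(2) by simp
    with assms(2) show False ..
  qed
  then show "t = z" using d by simp
qed

lemma G_fixed_point_imp_diag_pts:
  assumes "valid_pt p" and "inX r s p" and "G_fixed p"
  obtains e where "e * e = 1" and "r = s * e" and "p \<in> diag_pts e"
proof -
  obtain u1 v1 u2 v2 x y z t w where p: "p = Pt u1 v1 u2 v2 x y z t w"
    by (cases p)
  have fixed: "proj_eq p (g p)" if "g \<in> Ggrp" for g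
    using assms(3) that unfolding G_fixed_def by blast
  have "w = 0"
    using tau3_fixed_imp_w_eq_0 assms(2) fixed[OF G_tau3] unfolding p by blast
  have "proj_eq p (gam 2 p)"
    using fixed G_gam[of 2] by simp
  then have "y = x" "t = z"
    using tau2_gam_fixed_imp_diagonal[of 2, OF _ _ fixed[OF G_tau2, unfolded p]]
    unfolding p by simp_all
  from fixed[OF G_tau2] obtain e where ze: "z = e * x" and xe: "x = e * z"
    unfolding p tau2.simps proj_eq.simps by blast
  have p': "p = Pt u1 v1 u2 v2 x x (e * x) (e * x) 0"
    using p \<open>w = 0\<close> \<open>y = x\<close> \<open>t = z\<close> ze by simp
  have "x \<noteq> 0" using assms(1) p' by auto
  have "e * e = 1"
    using xe ze \<open>x \<noteq> 0\<close> by (metis mult.assoc mult_cancel_right1)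
  have "8 * x\<^sup>2 * r = 8 * x\<^sup>2 * (s * e)"
  proof -
    have sq: "(e * x + e * x)\<^sup>2 = 4 * (e * e) * x\<^sup>2"
      by (simp add: power2_eq_square algebra_simps)
    have "0\<^sup>2 + r * (x + x)\<^sup>2 + r * (e * x + e * x)\<^sup>2
        = (2*s + 2) * (x * (e * x) + x * (e * x)) + (2*s - 2) * (x * (e * x) + x * (e * x))"
      using assms(2) unfolding p' by simp
    then show ?thesis
      unfolding sq \<open>e * e = 1\<close> by (simp add: power2_eq_square algebra_simps)
  qed
  then have "r = s * e" using \<open>x \<noteq> 0\<close> by simp
  moreover have "v1 = u1" "v2 = u2" "u1 \<noteq> 0" "u2 \<noteq> 0"
    using assms(1,2) \<open>x \<noteq> 0\<close> \<open>e * e = 1\<close> unfolding p' by auto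
  ultimately show thesis
    using that \<open>e * e = 1\<close> \<open>x \<noteq> 0\<close> p' unfolding diag_pts_def by blast
qed

lemma G_fixed_points_iff_proj_eq_base:
  assumes "(r, s) \<noteq> (0, 0)" and "e * e = 1" and "r = s * e"
  shows "valid_pt p \<and> inX r s p \<and> G_fixed p \<longleftrightarrow> proj_eq (Pt 1 1 1 1 1 1 e e 0) p"
proof
  assume "valid_pt p \<and> inX r s p \<and> G_fixed p"
  then obtain e' where "r = s * e'" "p \<in> diag_pts e'"
    by (blast elim: G_fixed_point_imp_diag_pts)
  moreover have "s \<noteq> 0" using assms by auto
  ultimately show "proj_eq (Pt 1 1 1 1 1 1 e e 0) p"
    using assms(3) by (simp add: proj_eq_base_iff_diag_pts)
next
  assume "proj_eq (Pt 1 1 1 1 1 1 e e 0) p"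
  then show "valid_pt p \<and> inX r s p \<and> G_fixed p"
    using diag_pts_G_fixed assms(2,3) by (simp add: proj_eq_base_iff_diag_pts)
qed

lemma singular_X_base:
  assumes "e * e = 1" and "r = s * e"
  shows "singular_X r s (Pt 1 1 1 1 1 1 e e 0)"
proof -
  have "Pt 1 1 1 1 1 1 e e 0 \<in> diag_pts e"
    by (simp add: proj_eq_base_iff_diag_pts[symmetric] exI[of _ 1])
  then have "inX r s (Pt 1 1 1 1 1 1 e e 0)"
    using inX_diag_pts assms by blast
  moreover have "gradF3 r s (Pt 1 1 1 1 1 1 e e 0) = replicate 9 0"
    using assms by (simp add: algebra_simps numeral_eq_Suc)
  then have "\<forall>i<9. 0 * gradF1 (Pt 1 1 1 1 1 1 e e 0) ! i + 0 * gradF2 (Pt 1 1 1 1 1 1 e e 0) ! i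
      + 1 * gradF3 r s (Pt 1 1 1 1 1 1 e e 0) ! i = 0"
    by simp
  ultimately show ?thesis
    unfolding singular_X_def by (metis zero_neq_one prod.inject)
qed

theorem lemma5p1:
  fixes r s :: complex
  assumes "(r, s) \<noteq> (0, 0)"
  shows "(\<not> (r = s \<or> r = - s) \<longrightarrow> \<not> (\<exists>p. valid_pt p \<and> inX r s p \<and> G_fixed p))
       \<and> (r = s \<longrightarrow>
            (\<forall>p. valid_pt p \<and> inX r s p \<and> G_fixed p \<longleftrightarrow> proj_eq (Pt 1 1 1 1 1 1 1 1 0) p)
            \<and> singular_X r s (Pt 1 1 1 1 1 1 1 1 0))
       \<and> (r = - s \<longrightarrow>
            (\<forall>p. valid_pt p \<and> inX r s p \<and> G_fixed p \<longleftrightarrow> proj_eq (Pt 1 1 1 1 1 1 (-1) (-1) 0) p)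
            \<and> singular_X r s (Pt 1 1 1 1 1 1 (-1) (-1) 0))"
proof (intro conjI impI allI)
  assume "\<not> (r = s \<or> r = - s)"
  moreover have "e = 1 \<or> e = -1" if "e * e = 1" for e :: complex
    using that by (metis square_eq_1_iff)
  ultimately show "\<not> (\<exists>p. valid_pt p \<and> inX r s p \<and> G_fixed p)"
    by (metis G_fixed_point_imp_diag_pts mult.right_neutral mult_minus1_right)
qed (use assms G_fixed_points_iff_proj_eq_base[of r s 1] G_fixed_points_iff_proj_eq_base[of r s "-1"]
      singular_X_base[of 1 r s] singular_X_base[of "-1" r s] in simp_all)

end
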